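(* Let $\mathfrak{n}$ be a complex semisimple Lie algebra and $z\in\mathfrak{n}$ an element such that the adjoint operator $\operatorname{ad}(z)$ on $\mathfrak{n}$ has exactly three distinct eigenvalues $0,\alpha,\beta$. Then $\alpha+\beta=0$. *)

theory Defs
  imports Complex_Main
begin

text \<open>A complex Lie algebra: the underlying space is the whole type 'a, which is a
  complex vector space via the scalar multiplication sc; br is the Lie bracket.\<close>

definition lie_algebra :: "(complex \<Rightarrow> 'a::ab_group_add \<Rightarrow> 'a) \<Rightarrow> ('a \<Rightarrow> 'a \<Rightarrow> 'a) \<Rightarrow> bool" where
  "lie_algebra sc br \<longleftrightarrow>
     vector_space sc \<and>
     (\<forall>x y z. br (x + y) z = br x z + br y z) \<and>
     (\<forall>x y z. br x (y + z) = br x y + br x z) \<and>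
     (\<forall>c x y. br (sc c x) y = sc c (br x y)) \<and>
     (\<forall>c x y. br x (sc c y) = sc c (br x y)) \<and>
     (\<forall>x. br x x = 0) \<and>
     (\<forall>x y z. br x (br y z) + br y (br z x) + br z (br x y) = 0)"

definition fin_dim :: "(complex \<Rightarrow> 'a::ab_group_add \<Rightarrow> 'a) \<Rightarrow> bool" where
  "fin_dim sc \<longleftrightarrow> (\<exists>B. finite B \<and> module.span sc B = (UNIV :: 'a set))"

definition lie_ideal :: "(complex \<Rightarrow> 'a::ab_group_add \<Rightarrow> 'a) \<Rightarrow> ('a \<Rightarrow> 'a \<Rightarrow> 'a) \<Rightarrow> 'a set \<Rightarrow> bool" where
  "lie_ideal sc br I \<longleftrightarrow> module.subspace sc I \<and> (\<forall>x. \<forall>i\<in>I. br x i \<in> I)"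

fun derived :: "(complex \<Rightarrow> 'a::ab_group_add \<Rightarrow> 'a) \<Rightarrow> ('a \<Rightarrow> 'a \<Rightarrow> 'a) \<Rightarrow> 'a set \<Rightarrow> nat \<Rightarrow> 'a set" where
  "derived sc br I 0 = I"
| "derived sc br I (Suc k) =
     module.span sc {br a b | a b. a \<in> derived sc br I k \<and> b \<in> derived sc br I k}"

definition solvable_ideal :: "(complex \<Rightarrow> 'a::ab_group_add \<Rightarrow> 'a) \<Rightarrow> ('a \<Rightarrow> 'a \<Rightarrow> 'a) \<Rightarrow> 'a set \<Rightarrow> bool" where
  "solvable_ideal sc br I \<longleftrightarrow> (\<exists>k. derived sc br I k = {0})"

definition semisimple_lie_algebra :: "(complex \<Rightarrow> 'a::ab_group_add \<Rightarrow> 'a) \<Rightarrow> ('a \<Rightarrow> 'a \<Rightarrow> 'a) \<Rightarrow> bool" where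
  "semisimple_lie_algebra sc br \<longleftrightarrow>
     lie_algebra sc br \<and> fin_dim sc \<and>
     (\<forall>I. lie_ideal sc br I \<and> solvable_ideal sc br I \<longrightarrow> I = {0})"

definition ad_eigenvalues :: "(complex \<Rightarrow> 'a::ab_group_add \<Rightarrow> 'a) \<Rightarrow> ('a \<Rightarrow> 'a \<Rightarrow> 'a) \<Rightarrow> 'a \<Rightarrow> complex set" where
  "ad_eigenvalues sc br z = {c. \<exists>v. v \<noteq> 0 \<and> br z v = sc c v}"

end

theory Submission
  imports Defs "HOL-Computational_Algebra.Fundamental_Theorem_Algebra"
begin

text \<open>
  Write \<open>L c\<close> for the generalised eigenspace of \<open>ad z\<close> for \<open>c\<close>. Since \<open>ad z\<close> is a derivation,
  \<open>[L c, L d] \<subseteq> L (c + d)\<close>; moreover \<open>L c = 0\<close> unless \<open>c\<close> is an eigenvalue, and as \<open>\<complex>\<close> is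
  algebraically closed the algebra is spanned by \<open>L 0\<close>, \<open>L \<alpha>\<close> and \<open>L \<beta>\<close>.
  If \<open>\<alpha> + \<beta> \<noteq> 0\<close>, no sum \<open>c + d\<close> with \<open>c \<in> {0, \<alpha>, \<beta>}\<close>, \<open>d \<in> {\<alpha>, \<beta>}\<close> is \<open>0\<close>, so
  \<open>I = L \<alpha> + L \<beta>\<close> is an ideal; \<open>[I, I] \<subseteq> L (2\<alpha>) + L (2\<beta>)\<close>, and the next derived term vanishes
  because \<open>4\<alpha>\<close>, \<open>2\<alpha> + 2\<beta>\<close>, \<open>4\<beta>\<close> cannot be eigenvalues together with their summands.
  Thus \<open>I\<close> would be a nonzero solvable ideal.
\<close>

lemma (in module) span_image_sum_exists:
  "finite A \<Longrightarrow> x \<in> span (g ` A) \<Longrightarrow> \<exists>c. x = (\<Sum>i\<in>A. c i *s g i)"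
proof (induction A arbitrary: x rule: finite_induct)
  case (insert a A)
  then obtain k where "x - k *s g a \<in> span (g ` A)"
    using span_insert by auto
  with insert.IH obtain c where c: "x - k *s g a = (\<Sum>i\<in>A. c i *s g i)"
    by blast
  have "(\<Sum>i\<in>insert a A. (c(a := k)) i *s g i) = k *s g a + (\<Sum>i\<in>A. c i *s g i)"
    using insert.hyps by (simp add: sum.insert) (intro sum.cong, auto)
  then show ?case
    using c by (intro exI[of _ "c(a := k)"]) (simp add: algebra_simps)
qed simp

locale vector_space_endomorphism = vector_space scale
  for scale :: "'a::field \<Rightarrow> 'b::ab_group_add \<Rightarrow> 'b" (infixr \<open>*s\<close> 75) +
  fixes f :: "'b \<Rightarrow> 'b"
  assumes add: "f (x + y) = f x + f y"
    and scale: "f (c *s x) = c *s f x"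
begin

sublocale f: additive f
  by standard (rule add)

definition poly_apply :: "'a poly \<Rightarrow> 'b \<Rightarrow> 'b" where
  "poly_apply p v = (\<Sum>i\<le>degree p. coeff p i *s (f ^^ i) v)"

definition gen_eigenspace :: "'a \<Rightarrow> 'b set" where
  "gen_eigenspace c = {v. \<exists>n. poly_apply ([:-c, 1:] ^ n) v = 0}"

definition eigenvalues :: "'a set" where
  "eigenvalues = {c. \<exists>v. v \<noteq> 0 \<and> f v = c *s v}"

lemma poly_apply_bound:
  assumes "degree p \<le> n"
  shows "poly_apply p v = (\<Sum>i\<le>n. coeff p i *s (f ^^ i) v)"
  unfolding poly_apply_def
  by (rule sum.mono_neutral_left) (use assms in \<open>auto simp: coeff_eq_0\<close>)

lemma poly_apply_0 [simp]: "poly_apply 0 v = 0"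
  by (simp add: poly_apply_def)

lemma poly_apply_1 [simp]: "poly_apply 1 v = v"
  by (simp add: poly_apply_def)

lemma poly_apply_add: "poly_apply (p + q) v = poly_apply p v + poly_apply q v"
proof -
  let ?n = "max (degree p) (degree q)"
  have "degree (p + q) \<le> ?n"
    by (rule degree_add_le) auto
  then show ?thesis
    by (simp add: poly_apply_bound[of _ ?n] poly_apply_bound[of p ?n] poly_apply_bound[of q ?n]
        scale_left_distrib sum.distrib)
qed

lemma poly_apply_smult: "poly_apply (smult c p) v = c *s poly_apply p v"
  by (simp add: poly_apply_bound[OF degree_smult_le] poly_apply_def scale_sum_right)

lemma poly_apply_pCons: "poly_apply (pCons a p) v = a *s v + f (poly_apply p v)"
proof -
  have "poly_apply (pCons a p) v = (\<Sum>i\<le>Suc (degree p). coeff (pCons a p) i *s (f ^^ i) v)"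
    by (rule poly_apply_bound[OF degree_pCons_le])
  also have "\<dots> = a *s v + (\<Sum>i\<le>degree p. coeff p i *s (f ^^ Suc i) v)"
    by (subst sum.atMost_Suc_shift) simp
  also have "\<dots> = a *s v + f (poly_apply p v)"
    by (simp add: poly_apply_def f.sum scale)
  finally show ?thesis .
qed

lemma poly_apply_mult: "poly_apply (p * q) v = poly_apply p (poly_apply q v)"
  by (induction p) (simp_all add: poly_apply_add poly_apply_smult poly_apply_pCons)

lemma poly_apply_power_Suc: "poly_apply (p ^ Suc n) v = poly_apply (p ^ n) (poly_apply p v)"
  by (simp only: power_Suc2 poly_apply_mult)

lemma poly_apply_linear_factor: "poly_apply [:-c, 1:] v = f v - c *s v"
  by (simp add: poly_apply_pCons f.zero)

lemma poly_apply_monom: "poly_apply (monom c k) v = c *s (f ^^ k) v"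
  by (simp add: poly_apply_bound[OF degree_monom_le] coeff_monom
      if_distrib[of "\<lambda>a. a *s _"] cong: if_cong)

lemma poly_apply_sum: "poly_apply (\<Sum>i\<in>A. p i) v = (\<Sum>i\<in>A. poly_apply (p i) v)"
  by (induction A rule: infinite_finite_induct) (simp_all add: poly_apply_add)

lemma poly_apply_diff: "poly_apply (p - q) v = poly_apply p v - poly_apply q v"
  using poly_apply_add[of p "- q" v] poly_apply_smult[of "- 1" q v] by simp

lemma poly_apply_zero_right [simp]: "poly_apply p 0 = 0"
  by (induction p) (simp_all add: poly_apply_pCons f.zero)

lemma poly_apply_add_right: "poly_apply p (x + y) = poly_apply p x + poly_apply p y"
  by (induction p) (simp_all add: poly_apply_pCons add scale_right_distrib algebra_simps)

lemma eigenvector_in_gen_eigenspace: "f v = c *s v \<Longrightarrow> v \<in> gen_eigenspace c"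
  unfolding gen_eigenspace_def by (intro CollectI exI[of _ 1]) (simp add: poly_apply_linear_factor)

lemma gen_eigenspace_trivial:
  assumes "c \<notin> eigenvalues" and "v \<in> gen_eigenspace c"
  shows "v = 0"
proof -
  have "poly_apply ([:-c, 1:] ^ n) v = 0 \<Longrightarrow> v = 0" for n
  proof (induction n)
    case (Suc n)
    let ?w = "poly_apply ([:-c, 1:] ^ n) v"
    have "f ?w = c *s ?w"
      using Suc.prems unfolding power_Suc poly_apply_mult poly_apply_linear_factor by simp
    then show ?case
      using assms(1) Suc.IH unfolding eigenvalues_def by blast
  qed simp
  then show ?thesis
    using assms(2) unfolding gen_eigenspace_def by blast
qed

lemma annihilated_in_span_gen_eigenspaces:
  "poly_apply (\<Prod>c\<in>#A. [:-c, 1:]) v = 0 \<Longrightarrow> v \<in> span (\<Union>c\<in>set_mset A. gen_eigenspace c)"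
proof (induction "size A" arbitrary: A v rule: less_induct)
  case less
  show ?case
  proof (cases "\<exists>c d. c \<in># A \<and> d \<in># A \<and> c \<noteq> d")
    case True
    then obtain c d where cd: "c \<in># A" "d \<in># A" "c \<noteq> d"
      by blast
    have factor_killed: "f v - e *s v \<in> span (\<Union>c\<in>set_mset A. gen_eigenspace c)" if e: "e \<in># A" for e
    proof -
      obtain B where B: "A = add_mset e B"
        using multi_member_split[OF e] by blast
      have "(\<Prod>c\<in>#A. [:-c, 1:]) = (\<Prod>c\<in>#B. [:-c, 1:]) * [:-e, 1:]"
        by (simp add: B mult.commute)
      then have "poly_apply (\<Prod>c\<in>#B. [:-c, 1:]) (f v - e *s v) = 0"
        using less.prems by (simp only: poly_apply_mult poly_apply_linear_factor)
      then have "f v - e *s v \<in> span (\<Union>c\<in>set_mset B. gen_eigenspace c)"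
        using less.hyps[of B] B by simp
      also have "\<dots> \<subseteq> span (\<Union>c\<in>set_mset A. gen_eigenspace c)"
        by (rule span_mono) (auto simp: B)
      finally show ?thesis .
    qed
    \<comment> \<open>two distinct roots \<open>c \<noteq> d\<close> recover \<open>v\<close> from \<open>(f - c) v\<close> and \<open>(f - d) v\<close>\<close>
    have "(f v - c *s v) - (f v - d *s v) = (d - c) *s v"
      by (simp add: scale_left_diff_distrib)
    then have v_eq: "inverse (d - c) *s ((f v - c *s v) - (f v - d *s v)) = v"
      using cd(3) by simp
    have "inverse (d - c) *s ((f v - c *s v) - (f v - d *s v))
        \<in> span (\<Union>c\<in>set_mset A. gen_eigenspace c)"
      by (intro span_scale span_diff factor_killed cd(1,2))
    then show ?thesis
      by (simp only: v_eq)
  next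
    case False
    then obtain c where "set_mset A \<subseteq> {c}"
      by blast
    then have "A = replicate_mset (size A) c"
      by (rule set_mset_subset_singletonD)
    then obtain n where A: "A = replicate_mset n c"
      by (rule that)
    then have "v \<in> gen_eigenspace c"
      using less.prems unfolding gen_eigenspace_def by auto
    then show ?thesis
      using A less.prems by (cases n) (auto intro: span_base)
  qed
qed

lemma orbit_dependent:
  assumes "finite B" and "span B = UNIV"
  obtains k where "(f ^^ k) v \<in> span ((\<lambda>i. (f ^^ i) v) ` {..<k})"
proof -
  let ?orbit = "\<lambda>i. (f ^^ i) v"
  have "\<exists>k. ?orbit k \<in> span (?orbit ` {..<k})"
  proof (rule ccontr)
    assume "\<not> ?thesis"
    then have new: "?orbit k \<notin> span (?orbit ` {..<k})" for k
      by blast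
    have "independent (?orbit ` {..<k}) \<and> card (?orbit ` {..<k}) = k" for k
    proof (induction k)
      case (Suc k)
      have "?orbit k \<notin> ?orbit ` {..<k}"
        using new[of k] by (meson span_base)
      then show ?case
        using Suc new[of k] by (simp add: lessThan_Suc independent_insert card_insert_disjoint)
    qed (simp add: independent_empty)
    then show False
      using independent_span_bound[OF assms(1), of "?orbit ` {..<Suc (card B)}"] assms(2) by simp
  qed
  then show ?thesis
    using that by blast
qed

lemma exists_annihilating_poly:
  assumes "finite B" and "span B = UNIV"
  obtains p where "p \<noteq> 0" and "poly_apply p v = 0"
proof -
  obtain k where "(f ^^ k) v \<in> span ((\<lambda>i. (f ^^ i) v) ` {..<k})"
    using orbit_dependent[OF assms] by blast
  then obtain a where a: "(f ^^ k) v = (\<Sum>i<k. a i *s (f ^^ i) v)"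
    using span_image_sum_exists[of "{..<k}"] by blast
  define p where "p = monom 1 k - (\<Sum>i<k. monom (a i) i)"
  have "(\<Sum>i<k. coeff (monom (a i) i) k) = 0"
    by (rule sum.neutral) (auto simp: coeff_monom)
  then have "coeff p k = 1"
    by (simp add: p_def coeff_diff coeff_sum)
  then have "p \<noteq> 0"
    by auto
  moreover have "poly_apply p v = 0"
    using a by (simp add: p_def poly_apply_diff poly_apply_sum poly_apply_monom)
  ultimately show ?thesis
    by (rule that)
qed

end

locale alg_closed_endomorphism = vector_space_endomorphism scale f
  for scale :: "'a::alg_closed_field \<Rightarrow> 'b::ab_group_add \<Rightarrow> 'b" (infixr \<open>*s\<close> 75) and f
begin

lemma span_gen_eigenspaces_UNIV:
  assumes "finite B" and "span B = UNIV"
  shows "span (\<Union>c\<in>eigenvalues. gen_eigenspace c) = UNIV"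
proof safe
  fix v
  obtain p where p: "p \<noteq> 0" "poly_apply p v = 0"
    using exists_annihilating_poly[OF assms] by blast
  then obtain A where "smult (lead_coeff p) (\<Prod>c\<in>#A. [:-c, 1:]) = p"
    using alg_closed_imp_factorization by metis
  then have "poly_apply (smult (lead_coeff p) (\<Prod>c\<in>#A. [:-c, 1:])) v = 0"
    using p(2) by simp
  then have "lead_coeff p *s poly_apply (\<Prod>c\<in>#A. [:-c, 1:]) v = 0"
    by (simp only: poly_apply_smult)
  then have "poly_apply (\<Prod>c\<in>#A. [:-c, 1:]) v = 0"
    using p(1) by simp
  then have "v \<in> span (\<Union>c\<in>set_mset A. gen_eigenspace c)"
    by (rule annihilated_in_span_gen_eigenspaces)
  also have "\<dots> \<subseteq> span (insert 0 (\<Union>c\<in>eigenvalues. gen_eigenspace c))"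
    by (rule span_mono) (use gen_eigenspace_trivial in fastforce)
  finally show "v \<in> span (\<Union>c\<in>eigenvalues. gen_eigenspace c)"
    by simp
qed simp

end

locale complex_lie_algebra =
  fixes sc :: "complex \<Rightarrow> 'a::ab_group_add \<Rightarrow> 'a" and br :: "'a \<Rightarrow> 'a \<Rightarrow> 'a"
  assumes lie_algebra: "lie_algebra sc br"
begin

sublocale vector_space sc
  using lie_algebra unfolding lie_algebra_def by simp

lemma bracket_add_left: "br (x + y) w = br x w + br y w"
  and bracket_add_right: "br w (x + y) = br w x + br w y"
  and bracket_scale_left: "br (sc c x) y = sc c (br x y)"
  and bracket_scale_right: "br x (sc c y) = sc c (br x y)"
  and bracket_self: "br x x = 0"
  and jacobi: "br x (br y w) + br y (br w x) + br w (br x y) = 0"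
  using lie_algebra unfolding lie_algebra_def by blast+

sublocale ad: alg_closed_endomorphism sc "br z" for z
  by unfold_locales (simp_all add: bracket_add_right bracket_scale_right)

sublocale bracket_left: additive "\<lambda>x. br x y" for y
  by standard (rule bracket_add_left)

lemma bracket_antisym: "br x y = - br y x"
proof -
  have "br x y + br y x = br (x + y) (x + y)"
    unfolding bracket_add_left bracket_add_right by (simp add: bracket_self)
  then have "br x y + br y x = 0"
    by (simp only: bracket_self)
  then show ?thesis
    by (rule eq_neg_iff_add_eq_0[THEN iffD2])
qed

lemma ad_derivation: "br z (br a b) = br (br z a) b + br a (br z b)"
proof -
  have "br z (br a b) + br a (br b z) + br b (br z a) = 0"
    by (rule jacobi)
  moreover have "br a (br b z) = - br a (br z b)"
    by (metis bracket_antisym ad.f.minus)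
  moreover have "br b (br z a) = - br (br z a) b"
    by (rule bracket_antisym)
  ultimately show ?thesis
    by (simp add: algebra_simps eq_neg_iff_add_eq_0)
qed

lemma ad_shift_bracket:
  "ad.poly_apply z [:-(c + d), 1:] (br a b) =
     br (ad.poly_apply z [:-c, 1:] a) b + br a (ad.poly_apply z [:-d, 1:] b)"
  unfolding ad.poly_apply_linear_factor bracket_left.diff ad.f.diff
    bracket_scale_left bracket_scale_right ad_derivation[of z a b] scale_left_distrib
  by (simp add: diff_add_eq add_diff_eq diff_diff_eq2 add.assoc add.left_commute)

lemma bracket_gen_eigenspace:
  assumes "a \<in> ad.gen_eigenspace z c" and "b \<in> ad.gen_eigenspace z d"
  shows "br a b \<in> ad.gen_eigenspace z (c + d)"
proof -
  have "ad.poly_apply z ([:-(c + d), 1:] ^ (i + j)) (br a b) = 0"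
    if "ad.poly_apply z ([:-c, 1:] ^ i) a = 0" and "ad.poly_apply z ([:-d, 1:] ^ j) b = 0"
    for i j a b
    using that
  proof (induction "i + j" arbitrary: i j a b rule: less_induct)
    case less
    consider "i = 0" | "j = 0" | i' j' where "i = Suc i'" "j = Suc j'"
      by (meson not0_implies_Suc)
    then show ?case
    proof cases
      case 3
      let ?p = "[:-(c + d), 1:]"
      have "i' + j < i + j" and "i + j' < i + j" and same_sum: "i' + j = i + j'"
        using 3 by simp_all
      moreover have "ad.poly_apply z ([:-c, 1:] ^ i') (ad.poly_apply z [:-c, 1:] a) = 0"
        using less.prems(1) 3 by (simp only: ad.poly_apply_power_Suc)
      moreover have "ad.poly_apply z ([:-d, 1:] ^ j') (ad.poly_apply z [:-d, 1:] b) = 0"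
        using less.prems(2) 3 by (simp only: ad.poly_apply_power_Suc)
      ultimately have left: "ad.poly_apply z (?p ^ (i' + j)) (br (ad.poly_apply z [:-c, 1:] a) b) = 0"
        and right: "ad.poly_apply z (?p ^ (i + j')) (br a (ad.poly_apply z [:-d, 1:] b)) = 0"
        using less.hyps less.prems by blast+
      have "ad.poly_apply z (?p ^ (i + j)) (br a b)
          = ad.poly_apply z (?p ^ (i' + j)) (ad.poly_apply z ?p (br a b))"
        using 3 by (simp only: add_Suc ad.poly_apply_power_Suc)
      also have "\<dots> = ad.poly_apply z (?p ^ (i' + j)) (br (ad.poly_apply z [:-c, 1:] a) b)
          + ad.poly_apply z (?p ^ (i + j')) (br a (ad.poly_apply z [:-d, 1:] b))"
        by (simp only: ad_shift_bracket ad.poly_apply_add_right same_sum)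
      finally show ?thesis
        by (simp only: left right add_0)
    qed (use less.prems in \<open>simp_all add: bracket_left.zero ad.f.zero\<close>)
  qed
  then show ?thesis
    using assms unfolding ad.gen_eigenspace_def by blast
qed

lemma bracket_span_in_subspace:
  assumes "x \<in> span A" and "y \<in> span B" and "subspace U"
    and "\<And>a b. a \<in> A \<Longrightarrow> b \<in> B \<Longrightarrow> br a b \<in> U"
  shows "br x y \<in> U"
proof -
  have inner: "br a y \<in> U" if "a \<in> A" for a
    using assms(2)
  proof (induction rule: span_induct_alt)
    case (step c b y)
    then show ?case
      using assms(3,4) that by (simp add: bracket_add_right bracket_scale_right subspace_add subspace_scale)
  qed (simp add: ad.f.zero subspace_0[OF assms(3)])
  show ?thesis
    using assms(1)
  proof (induction rule: span_induct_alt)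
    case (step c a x)
    then show ?case
      using assms(3) inner by (simp add: bracket_add_left bracket_scale_left subspace_add subspace_scale)
  qed (simp add: bracket_left.zero subspace_0[OF assms(3)])
qed

definition gen_eigenspace_sum :: "'a \<Rightarrow> complex set \<Rightarrow> 'a set" where
  "gen_eigenspace_sum z C = span (\<Union>c\<in>C. ad.gen_eigenspace z c)"

lemma bracket_gen_eigenspace_sum:
  assumes sums: "\<And>c d. c \<in> C \<Longrightarrow> d \<in> D \<Longrightarrow> c \<in> ad.eigenvalues z \<Longrightarrow> d \<in> ad.eigenvalues z
      \<Longrightarrow> c + d \<in> ad.eigenvalues z \<Longrightarrow> c + d \<in> E"
    and "x \<in> gen_eigenspace_sum z C" and "y \<in> gen_eigenspace_sum z D"
  shows "br x y \<in> gen_eigenspace_sum z E"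
  using assms(2,3) unfolding gen_eigenspace_sum_def
proof (rule bracket_span_in_subspace)
  fix a b
  assume "a \<in> (\<Union>c\<in>C. ad.gen_eigenspace z c)" and "b \<in> (\<Union>d\<in>D. ad.gen_eigenspace z d)"
  then obtain c d where cd: "c \<in> C" "a \<in> ad.gen_eigenspace z c" "d \<in> D" "b \<in> ad.gen_eigenspace z d"
    by blast
  then have ab: "br a b \<in> ad.gen_eigenspace z (c + d)"
    by (simp add: bracket_gen_eigenspace)
  show "br a b \<in> span (\<Union>e\<in>E. ad.gen_eigenspace z e)"
  proof (cases "c \<in> ad.eigenvalues z \<and> d \<in> ad.eigenvalues z \<and> c + d \<in> ad.eigenvalues z")
    case True
    then show ?thesis
      using sums cd ab by (blast intro: span_base)
  next
    case False
    then have "br a b = 0"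
      using cd ab ad.gen_eigenspace_trivial by (metis ad.f.zero bracket_left.zero)
    then show ?thesis
      by (simp add: span_zero)
  qed
qed simp

lemma lie_ideal_gen_eigenspace_sum:
  assumes "finite B" and "span B = UNIV"
    and "\<And>c d. c \<in> ad.eigenvalues z \<Longrightarrow> d \<in> C \<Longrightarrow> c + d \<in> ad.eigenvalues z \<Longrightarrow> c + d \<in> C"
  shows "lie_ideal sc br (gen_eigenspace_sum z C)"
  unfolding lie_ideal_def
proof (intro conjI allI ballI)
  show "subspace (gen_eigenspace_sum z C)"
    by (simp add: gen_eigenspace_sum_def)
  fix x y
  assume "y \<in> gen_eigenspace_sum z C"
  moreover have "x \<in> gen_eigenspace_sum z (ad.eigenvalues z)"
    using ad.span_gen_eigenspaces_UNIV[OF assms(1,2)] by (simp add: gen_eigenspace_sum_def)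
  ultimately show "br x y \<in> gen_eigenspace_sum z C"
    using assms(3) by (blast intro: bracket_gen_eigenspace_sum)
qed

lemma derived_Suc_gen_eigenspace_sum:
  assumes "derived sc br I k \<subseteq> gen_eigenspace_sum z C"
    and "\<And>c d. c \<in> C \<Longrightarrow> d \<in> C \<Longrightarrow> c \<in> ad.eigenvalues z \<Longrightarrow> d \<in> ad.eigenvalues z
      \<Longrightarrow> c + d \<in> ad.eigenvalues z \<Longrightarrow> c + d \<in> E"
  shows "derived sc br I (Suc k) \<subseteq> gen_eigenspace_sum z E"
proof -
  have "{br a b | a b. a \<in> derived sc br I k \<and> b \<in> derived sc br I k} \<subseteq> gen_eigenspace_sum z E"
    using assms by (blast intro: bracket_gen_eigenspace_sum)
  then show ?thesis
    by (simp add: span_minimal gen_eigenspace_sum_def)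
qed

end

theorem lemma3p4:
  fixes sc :: "complex \<Rightarrow> 'a::ab_group_add \<Rightarrow> 'a"
    and br :: "'a \<Rightarrow> 'a \<Rightarrow> 'a"
    and z :: 'a
    and \<alpha> \<beta> :: complex
  assumes "semisimple_lie_algebra sc br"
    and "ad_eigenvalues sc br z = {0, \<alpha>, \<beta>}"
    and "\<alpha> \<noteq> 0" and "\<beta> \<noteq> 0" and "\<alpha> \<noteq> \<beta>"
  shows "\<alpha> + \<beta> = 0"
proof (rule ccontr)
  assume "\<alpha> + \<beta> \<noteq> 0"
  interpret complex_lie_algebra sc br
    using assms(1) unfolding semisimple_lie_algebra_def by unfold_locales simp
  obtain B where B: "finite B" "span B = UNIV"
    using assms(1) unfolding semisimple_lie_algebra_def fin_dim_def by blast
  have ev: "ad.eigenvalues z = {0, \<alpha>, \<beta>}"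
    using assms(2) unfolding ad_eigenvalues_def ad.eigenvalues_def .
  define I where "I = gen_eigenspace_sum z {\<alpha>, \<beta>}"
  have "lie_ideal sc br I"
    unfolding I_def using assms(3-5) \<open>\<alpha> + \<beta> \<noteq> 0\<close>
    by (intro lie_ideal_gen_eigenspace_sum[OF B]) (auto simp: ev add_eq_0_iff2)
  have "derived sc br I 0 \<subseteq> gen_eigenspace_sum z {\<alpha>, \<beta>}"
    by (simp add: I_def)
  then have "derived sc br I (Suc 0) \<subseteq> gen_eigenspace_sum z {2 * \<alpha>, 2 * \<beta>}"
    by (rule derived_Suc_gen_eigenspace_sum) (use assms(3,4) \<open>\<alpha> + \<beta> \<noteq> 0\<close> in \<open>auto simp: ev add.commute\<close>)
  then have "derived sc br I (Suc (Suc 0)) \<subseteq> gen_eigenspace_sum z {}"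
    by (rule derived_Suc_gen_eigenspace_sum) (use assms(3-5) in \<open>auto simp: ev\<close>)
  then have "solvable_ideal sc br I"
    unfolding solvable_ideal_def
    by (intro exI[of _ "Suc (Suc 0)"]) (auto simp: gen_eigenspace_sum_def span_zero)
  then have "I = {0}"
    using assms(1) \<open>lie_ideal sc br I\<close> unfolding semisimple_lie_algebra_def by blast
  moreover obtain v where "v \<noteq> 0" "br z v = sc \<alpha> v"
    using ev unfolding ad.eigenvalues_def by blast
  then have "v \<in> I" "v \<noteq> 0"
    unfolding I_def gen_eigenspace_sum_def by (auto intro: span_base ad.eigenvector_in_gen_eigenspace)
  ultimately show False
    by blast
qed

end
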